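(* Let $\mathfrak g$ be an almost abelian Lie algebra with a Hermitian structure $(J,g)$ and let $e$ be an admissible frame with data $\lambda,v,A$. Then the Chern connection of $g$ is flat if and only if $\lambda=0$, $v=0$ and $[A,A^\ast]=0$.
   Context: Setup: Hermitian structure $(J,g)$ on a real Lie algebra $\mathfrak g$ of dimension $2n$ ($J$ integrable, $g$ a $J$-invariant inner product), viewed as a left-invariant Hermitian structure on the corresponding simply connected Lie group. $\mathfrak g^{1,0}=\{x-\sqrt{-1}Jx\}$; a unitary frame is a basis $e_1,\dots,e_n$ of $\mathfrak g^{1,0}$ with $g(e_i,\bar e_j)=\delta_{ij}$, dual coframe $\varphi_i$, $d$ the Chevalley–Eilenberg differential. $\mathfrak g$ is almost abelian if non-abelian with an abelian ideal of codimension one; an admissible frame is a unitary frame with $d\varphi_1=-\lambda\,\varphi_1\wedge\bar\varphi_1$, $d\varphi_i=-\bar v_i\,\varphi_1\wedge\bar\varphi_1+\sum_{j=2}^n\overline{A_{ij}}(\varphi_1+\bar\varphi_1)\wedge\varphi_j$ ($2\le i\le n$), $\lambda\in\mathbb R$, $v\in\mathbb C^{n-1}$, $A\in M_{n-1}(\mathbb C)$. The Chern connection is the unique connection preserving $J$ and $g$ whose torsion has vanishing $(1,1)$-part. *)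

theory Defs
  imports "HOL-Analysis.Analysis"
begin

definition lie_algebra :: "('a::euclidean_space \<Rightarrow> 'a \<Rightarrow> 'a) \<Rightarrow> bool" where
  "lie_algebra br \<longleftrightarrow> bilinear br \<and> (\<forall>x. br x x = 0) \<and>
     (\<forall>x y z. br x (br y z) + br y (br z x) + br z (br x y) = 0)"

definition almost_abelian :: "('a::euclidean_space \<Rightarrow> 'a \<Rightarrow> 'a) \<Rightarrow> bool" where
  "almost_abelian br \<longleftrightarrow> lie_algebra br \<and> (\<exists>x y. br x y \<noteq> 0) \<and>
     (\<exists>h. subspace h \<and> dim h = DIM('a) - 1 \<and>
          (\<forall>x y. y \<in> h \<longrightarrow> br x y \<in> h) \<and>
          (\<forall>y z. y \<in> h \<longrightarrow> z \<in> h \<longrightarrow> br y z = 0))"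

text \<open>Hermitian structure (J,g): J integrable complex structure, g a J-invariant inner product.\<close>
definition hermitian_structure ::
  "('a::euclidean_space \<Rightarrow> 'a \<Rightarrow> 'a) \<Rightarrow> ('a \<Rightarrow> 'a) \<Rightarrow> ('a \<Rightarrow> 'a \<Rightarrow> real) \<Rightarrow> bool" where
  "hermitian_structure br J g \<longleftrightarrow>
     linear J \<and> (\<forall>x. J (J x) = - x) \<and>
     (\<forall>x y. br (J x) (J y) - J (br (J x) y) - J (br x (J y)) - br x y = 0) \<and>
     bilinear g \<and> (\<forall>x y. g x y = g y x) \<and> (\<forall>x. x \<noteq> 0 \<longrightarrow> g x x > 0) \<and>
     (\<forall>x y. g (J x) (J y) = g x y)"

text \<open>Complexification: the pair (u,w) stands for u + sqrt(-1) w.\<close>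
definition cconj :: "'a::real_vector \<times> 'a \<Rightarrow> 'a \<times> 'a" where
  "cconj X = (fst X, - snd X)"

definition gC :: "('a \<Rightarrow> 'a \<Rightarrow> real) \<Rightarrow> 'a \<times> 'a \<Rightarrow> 'a \<times> 'a \<Rightarrow> complex" where
  "gC g X Y = Complex (g (fst X) (fst Y) - g (snd X) (snd Y))
                      (g (fst X) (snd Y) + g (snd X) (fst Y))"

definition g10 :: "('a::real_vector \<Rightarrow> 'a) \<Rightarrow> ('a \<times> 'a) set" where
  "g10 J = {(x, - J x) | x. True}"

text \<open>Complex 1-forms on g^C, given by their restriction to g (a real-linear map to complex);
  cext gives the complex-linear extension.\<close>
definition cext :: "('a \<Rightarrow> complex) \<Rightarrow> 'a \<times> 'a \<Rightarrow> complex" where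
  "cext \<alpha> X = \<alpha> (fst X) + \<i> * \<alpha> (snd X)"

definition cnjf :: "('a \<Rightarrow> complex) \<Rightarrow> 'a \<Rightarrow> complex" where
  "cnjf \<alpha> = (\<lambda>x. cnj (\<alpha> x))"

definition wedge :: "('a \<Rightarrow> complex) \<Rightarrow> ('a \<Rightarrow> complex) \<Rightarrow> 'a \<Rightarrow> 'a \<Rightarrow> complex" where
  "wedge \<alpha> \<beta> x y = \<alpha> x * \<beta> y - \<alpha> y * \<beta> x"

definition dCE :: "('a \<Rightarrow> 'a \<Rightarrow> 'a) \<Rightarrow> ('a \<Rightarrow> complex) \<Rightarrow> 'a \<Rightarrow> 'a \<Rightarrow> complex" where
  "dCE br \<alpha> x y = - \<alpha> (br x y)"

definition unitary_frame_coframe ::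
  "('a::euclidean_space \<Rightarrow> 'a) \<Rightarrow> ('a \<Rightarrow> 'a \<Rightarrow> real) \<Rightarrow> nat \<Rightarrow> (nat \<Rightarrow> 'a \<times> 'a)
     \<Rightarrow> (nat \<Rightarrow> 'a \<Rightarrow> complex) \<Rightarrow> bool" where
  "unitary_frame_coframe J g n e \<phi> \<longleftrightarrow>
     (\<forall>i\<in>{1..n}. e i \<in> g10 J) \<and>
     (\<forall>i\<in>{1..n}. \<forall>j\<in>{1..n}. gC g (e i) (cconj (e j)) = (if i = j then 1 else 0)) \<and>
     (\<forall>i\<in>{1..n}. linear (\<phi> i)) \<and>
     (\<forall>i\<in>{1..n}. \<forall>j\<in>{1..n}. cext (\<phi> i) (e j) = (if i = j then 1 else 0)
                              \<and> cext (\<phi> i) (cconj (e j)) = 0)"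

text \<open>Admissible frame with data lambda, v = (v_2..v_n), A = (A_ij)_{2<=i,j<=n}.
  Equalities of complex 2-forms are tested on real arguments (equivalent by complex bilinearity).\<close>
definition admissible_frame ::
  "('a::euclidean_space \<Rightarrow> 'a \<Rightarrow> 'a) \<Rightarrow> ('a \<Rightarrow> 'a) \<Rightarrow> ('a \<Rightarrow> 'a \<Rightarrow> real) \<Rightarrow> nat
     \<Rightarrow> (nat \<Rightarrow> 'a \<times> 'a) \<Rightarrow> (nat \<Rightarrow> 'a \<Rightarrow> complex)
     \<Rightarrow> real \<Rightarrow> (nat \<Rightarrow> complex) \<Rightarrow> (nat \<Rightarrow> nat \<Rightarrow> complex) \<Rightarrow> bool" where
  "admissible_frame br J g n e \<phi> lam v A \<longleftrightarrow>
     unitary_frame_coframe J g n e \<phi> \<and>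
     (\<forall>x y. dCE br (\<phi> 1) x y = - complex_of_real lam * wedge (\<phi> 1) (cnjf (\<phi> 1)) x y) \<and>
     (\<forall>i\<in>{2..n}. \<forall>x y. dCE br (\<phi> i) x y =
         - cnj (v i) * wedge (\<phi> 1) (cnjf (\<phi> 1)) x y
         + (\<Sum>j=2..n. cnj (A i j) * wedge (\<lambda>z. \<phi> 1 z + cnjf (\<phi> 1) z) (\<phi> j) x y))"

text \<open>Left-invariant connections = bilinear maps nab x y = nabla_x y on g.\<close>
definition torsion :: "('a \<Rightarrow> 'a \<Rightarrow> 'a) \<Rightarrow> ('a \<Rightarrow> 'a \<Rightarrow> 'a) \<Rightarrow> 'a \<Rightarrow> 'a \<Rightarrow> 'a::real_vector" where
  "torsion br nab x y = nab x y - nab y x - br x y"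

definition is_chern_connection ::
  "('a::euclidean_space \<Rightarrow> 'a \<Rightarrow> 'a) \<Rightarrow> ('a \<Rightarrow> 'a) \<Rightarrow> ('a \<Rightarrow> 'a \<Rightarrow> real)
     \<Rightarrow> ('a \<Rightarrow> 'a \<Rightarrow> 'a) \<Rightarrow> bool" where
  "is_chern_connection br J g nab \<longleftrightarrow> bilinear nab \<and>
     (\<forall>x y. nab x (J y) = J (nab x y)) \<and>
     (\<forall>x y z. g (nab x y) z + g y (nab x z) = 0) \<and>
     (\<forall>x y. torsion br nab x y + torsion br nab (J x) (J y) = 0)"

definition chern_connection ::
  "('a::euclidean_space \<Rightarrow> 'a \<Rightarrow> 'a) \<Rightarrow> ('a \<Rightarrow> 'a) \<Rightarrow> ('a \<Rightarrow> 'a \<Rightarrow> real) \<Rightarrow> ('a \<Rightarrow> 'a \<Rightarrow> 'a)" where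
  "chern_connection br J g = (THE nab. is_chern_connection br J g nab)"

definition flat :: "('a::real_vector \<Rightarrow> 'a \<Rightarrow> 'a) \<Rightarrow> ('a \<Rightarrow> 'a \<Rightarrow> 'a) \<Rightarrow> bool" where
  "flat br nab \<longleftrightarrow> (\<forall>x y z. nab x (nab y z) - nab y (nab x z) - nab (br x y) z = 0)"

end

theory Submission
  imports Defs
begin

text \<open>
  In an admissible frame the structure equations read d phi = - (phi_1 + conj phi_1) \<and> M phi
  for an explicit matrix M built from lambda, v and A. The connection whose matrix is
  theta = conj phi_1 M - phi_1 M* is J-linear, metric, and its torsion has no (1,1)-part, so by
  uniqueness it is the Chern connection. As theta depends on its argument only through phi_1,
  its curvature is (phi_1 \<and> conj phi_1) (MM* - M*M + lambda (M + M*)), so flatness means that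
  this matrix vanishes. Its (1,1)-entry is -2 lambda^2 - |v|^2, which forces lambda = 0 and
  v = 0; the remaining block is then the conjugate of [A, A*].
\<close>

section \<open>The coefficient matrix of an admissible frame\<close>

definition coefficient_matrix :: "real \<Rightarrow> (nat \<Rightarrow> complex) \<Rightarrow> (nat \<Rightarrow> nat \<Rightarrow> complex) \<Rightarrow> nat \<Rightarrow> nat \<Rightarrow> complex" where
  "coefficient_matrix lam v A k l =
     (if k = 1 then (if l = 1 then - of_real lam else 0)
      else if l = 1 then - cnj (v k) else - cnj (A k l))"

definition curvature_matrix :: "nat \<Rightarrow> real \<Rightarrow> (nat \<Rightarrow> nat \<Rightarrow> complex) \<Rightarrow> nat \<Rightarrow> nat \<Rightarrow> complex" where
  "curvature_matrix n lam M k m =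
     (\<Sum>l=1..n. M k l * cnj (M m l)) - (\<Sum>l=1..n. cnj (M l k) * M l m)
     + of_real lam * (M k m + cnj (M m k))"

lemma sum_atLeastAtMost_1_split:
  "1 \<le> n \<Longrightarrow> (\<Sum>l=1..n. f l) = f 1 + (\<Sum>l=2..n. f (l::nat))"
  by (simp add: sum.atLeast_Suc_atMost numeral_2_eq_2)

lemma curvature_coefficient_matrix_1_1:
  assumes "1 \<le> n"
  shows "curvature_matrix n lam (coefficient_matrix lam v A) 1 1 =
           - of_real (2 * lam\<^sup>2 + (\<Sum>l=2..n. (cmod (v l))\<^sup>2))"
proof -
  have "(\<Sum>l=2..n. cnj (coefficient_matrix lam v A l 1) * coefficient_matrix lam v A l 1)
        = (\<Sum>l=2..n. of_real ((cmod (v l))\<^sup>2))"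
    by (rule sum.cong) (simp_all add: coefficient_matrix_def flip: complex_norm_square)
  then show ?thesis
    unfolding curvature_matrix_def sum_atLeastAtMost_1_split[OF assms]
    by (simp add: coefficient_matrix_def power2_eq_square)
qed

lemma curvature_coefficient_matrix_border:
  assumes "\<forall>i\<in>{2..n}. v i = 0" and "k \<in> {1..n}" and "m \<in> {1..n}" and "k = 1 \<or> m = 1"
  shows "curvature_matrix n 0 (coefficient_matrix 0 v A) k m = 0"
proof -
  have "coefficient_matrix 0 v A l 1 = 0" "coefficient_matrix 0 v A 1 l = 0" if "l \<in> {1..n}" for l
    using assms(1) that by (auto simp: coefficient_matrix_def)
  then show ?thesis
    using assms(2-4) by (auto simp: curvature_matrix_def)
qed

lemma curvature_coefficient_matrix_interior:
  assumes "\<forall>i\<in>{2..n}. v i = 0" and "k \<in> {2..n}" and "m \<in> {2..n}"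
  shows "curvature_matrix n 0 (coefficient_matrix 0 v A) k m =
    cnj ((\<Sum>l=2..n. A k l * cnj (A m l)) - (\<Sum>l=2..n. cnj (A l k) * A l m))"
proof -
  let ?M = "coefficient_matrix 0 v A"
  have border: "?M k 1 = 0" "?M m 1 = 0" "?M 1 k = 0" "?M 1 m = 0"
    using assms by (auto simp: coefficient_matrix_def)
  have "(\<Sum>l=2..n. ?M k l * cnj (?M m l)) = cnj (\<Sum>l=2..n. A k l * cnj (A m l))"
    unfolding cnj_sum by (rule sum.cong) (use assms in \<open>auto simp: coefficient_matrix_def\<close>)
  moreover have "(\<Sum>l=2..n. cnj (?M l k) * ?M l m) = cnj (\<Sum>l=2..n. cnj (A l k) * A l m)"
    unfolding cnj_sum by (rule sum.cong) (use assms in \<open>auto simp: coefficient_matrix_def\<close>)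
  moreover have "1 \<le> n" using assms(2) by simp
  ultimately show ?thesis
    unfolding curvature_matrix_def sum_atLeastAtMost_1_split[OF \<open>1 \<le> n\<close>] border by simp
qed

lemma curvature_coefficient_matrix_eq_0_iff:
  assumes "1 \<le> n"
  shows "(\<forall>k\<in>{1..n}. \<forall>m\<in>{1..n}. curvature_matrix n lam (coefficient_matrix lam v A) k m = 0) \<longleftrightarrow>
    lam = 0 \<and> (\<forall>i\<in>{2..n}. v i = 0) \<and>
    (\<forall>i\<in>{2..n}. \<forall>j\<in>{2..n}.
       (\<Sum>k=2..n. A i k * cnj (A j k)) = (\<Sum>k=2..n. cnj (A k i) * A k j))"
    (is "?flat \<longleftrightarrow> _ \<and> _ \<and> ?normal")
proof
  assume flat: ?flat
  have "curvature_matrix n lam (coefficient_matrix lam v A) 1 1 = 0"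
    using flat assms by simp
  then have "2 * lam\<^sup>2 + (\<Sum>l=2..n. (cmod (v l))\<^sup>2) = 0"
    unfolding curvature_coefficient_matrix_1_1[OF assms] by (simp only: neg_equal_0_iff_equal of_real_eq_0_iff)
  moreover have "(\<Sum>l=2..n. (cmod (v l))\<^sup>2) \<ge> 0"
    by (simp add: sum_nonneg)
  ultimately have lam: "lam = 0" and "(\<Sum>l=2..n. (cmod (v l))\<^sup>2) = 0"
    by (smt (verit) zero_le_power2 power_eq_0_iff)+
  then have v: "\<forall>i\<in>{2..n}. v i = 0"
    by (simp add: sum_nonneg_eq_0_iff)
  have ?normal
  proof (intro ballI)
    fix i j assume i: "i \<in> {2..n}" and j: "j \<in> {2..n}"
    then have "curvature_matrix n 0 (coefficient_matrix 0 v A) i j = 0"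
      using flat unfolding lam by auto
    then show "(\<Sum>k=2..n. A i k * cnj (A j k)) = (\<Sum>k=2..n. cnj (A k i) * A k j)"
      unfolding curvature_coefficient_matrix_interior[OF v i j]
      by (simp only: complex_cnj_zero_iff right_minus_eq)
  qed
  with lam v show "lam = 0 \<and> (\<forall>i\<in>{2..n}. v i = 0) \<and> ?normal" by blast
next
  assume "lam = 0 \<and> (\<forall>i\<in>{2..n}. v i = 0) \<and> ?normal"
  then have lam: "lam = 0" and v: "\<forall>i\<in>{2..n}. v i = 0" and normal: ?normal by blast+
  show ?flat
  proof (intro ballI)
    fix k m assume k: "k \<in> {1..n}" and m: "m \<in> {1..n}"
    show "curvature_matrix n lam (coefficient_matrix lam v A) k m = 0"
    proof (cases "k = 1 \<or> m = 1")
      case True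
      then show ?thesis unfolding lam by (rule curvature_coefficient_matrix_border[OF v k m])
    next
      case False
      then have "k \<in> {2..n}" "m \<in> {2..n}" using k m by auto
      then show ?thesis
        unfolding lam curvature_coefficient_matrix_interior[OF v \<open>k \<in> {2..n}\<close> \<open>m \<in> {2..n}\<close>]
        using normal by simp
    qed
  qed
qed

section \<open>Uniqueness of the Chern connection\<close>

locale hermitian_metric =
  fixes J :: "'a::euclidean_space \<Rightarrow> 'a" and g :: "'a \<Rightarrow> 'a \<Rightarrow> real"
  assumes J_linear: "linear J" and J_J [simp]: "J (J x) = - x"
    and g_bilinear: "bilinear g" and g_sym: "g x y = g y x"
    and g_pos: "x \<noteq> 0 \<Longrightarrow> 0 < g x x" and g_J [simp]: "g (J x) (J y) = g x y"
begin

sublocale J: bounded_linear J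
  using J_linear by (simp add: linear_conv_bounded_linear)

sublocale g: bounded_bilinear g
  using g_bilinear by (simp add: bilinear_conv_bounded_bilinear)

lemma g_J_right: "g x (J y) = - g (J x) y"
  using g_J[of x "J y"] by (simp add: g.minus_right)

lemma skew_J_equivariant_eq_0:
  assumes minus_left: "\<And>x y. S (- x) y = - S x y"
    and minus_right: "\<And>x y. S x (- y) = - S x y"
    and J_right: "\<And>x y. S x (J y) = J (S x y)"
    and skew: "\<And>x y z. g (S x y) z = - g y (S x z)"
    and torsion: "\<And>x y. S x y - S y x + S (J x) (J y) - S (J y) (J x) = 0"
  shows "S x y = 0"
proof -
  define F where "F x y = S x y + S (J x) (J y)" for x y
  have F_sym: "F x y = F y x" for x y
    using torsion[of x y] by (simp add: F_def algebra_simps)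
  have F_0: "F x y = 0" for x y
  proof -
    \<comment> \<open>F is J-linear in its second argument and J-antilinear in its first.\<close>
    have "J (F x y) = F x (J y)" by (simp add: F_def J_right J.add minus_right)
    also have "\<dots> = F (J y) x" by (rule F_sym)
    also have "\<dots> = - J (F y x)" by (simp add: F_def J_right J.add J.neg minus_left)
    finally have "J (F x y) = 0"
      by (simp add: F_sym[of y x] eq_neg_iff_add_eq_0 flip: scaleR_2)
    then show ?thesis using J_J[of "F x y"] by simp
  qed
  have J_left: "S (J x) y = J (S x y)" for x y
    using F_0[of x "J y"] by (simp add: F_def J_right minus_right eq_neg_iff_add_eq_0)
  let ?t = "J (S x y)"
  have "g ?t u = - g ?t u" for u
  proof -
    have "g ?t u = g (S (J x) y) u" by (simp add: J_left)
    also have "\<dots> = g (J y) (S x u)" using skew[of "J x" y u] by (simp add: J_left g_J_right)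
    also have "\<dots> = - g ?t u"
      using skew[of x u "J y"] g_sym[of "J y" "S x u"] g_sym[of u ?t] by (simp add: J_right)
    finally show ?thesis .
  qed
  then have "g ?t ?t = 0" using equal_neg_zero by blast
  then have "?t = 0" using g_pos[of ?t] by force
  then show ?thesis using J_J[of "S x y"] by simp
qed

lemma chern_connection_unique:
  assumes "is_chern_connection br J g N" and "is_chern_connection br J g N'"
  shows "N = N'"
proof -
  have "N x y - N' x y = 0" for x y
  proof (rule skew_J_equivariant_eq_0[where S = "\<lambda>x y. N x y - N' x y"])
    have bil: "bilinear N" "bilinear N'" and
      J_comm: "\<And>x y. N x (J y) = J (N x y)" "\<And>x y. N' x (J y) = J (N' x y)" and
      metric: "\<And>x y z. g (N x y) z + g y (N x z) = 0" "\<And>x y z. g (N' x y) z + g y (N' x z) = 0" and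
      T: "\<And>x y. torsion br N x y + torsion br N (J x) (J y) = 0"
         "\<And>x y. torsion br N' x y + torsion br N' (J x) (J y) = 0"
      using assms by (auto simp: is_chern_connection_def)
    show "N (- x) y - N' (- x) y = - (N x y - N' x y)" for x y
      using bilinear_lneg[OF bil(1)] bilinear_lneg[OF bil(2)] by simp
    show "N x (- y) - N' x (- y) = - (N x y - N' x y)" for x y
      using bilinear_rneg[OF bil(1)] bilinear_rneg[OF bil(2)] by simp
    show "N x (J y) - N' x (J y) = J (N x y - N' x y)" for x y
      by (simp add: J_comm J.diff)
    show "g (N x y - N' x y) z = - g y (N x z - N' x z)" for x y z
      using metric[of x y z] by (simp add: g.diff_left g.diff_right)
    show "N x y - N' x y - (N y x - N' y x) + (N (J x) (J y) - N' (J x) (J y))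
          - (N (J y) (J x) - N' (J y) (J x)) = 0" for x y
      using T[of x y] by (simp add: torsion_def algebra_simps)
  qed
  then show ?thesis by (simp add: fun_eq_iff)
qed

lemma chern_connection_eqI:
  "is_chern_connection br J g N \<Longrightarrow> chern_connection br J g = N"
  unfolding chern_connection_def by (blast intro: the_equality chern_connection_unique)

end

lemma hermitian_structure_imp_hermitian_metric:
  "hermitian_structure br J g \<Longrightarrow> hermitian_metric J g"
  by (simp add: hermitian_structure_def hermitian_metric_def)

section \<open>Unitary coframes\<close>

locale unitary_coframe = hermitian_metric J g
  for J :: "'a::euclidean_space \<Rightarrow> 'a" and g +
  fixes n :: nat and e :: "nat \<Rightarrow> 'a \<times> 'a" and \<phi> :: "nat \<Rightarrow> 'a \<Rightarrow> complex"
  assumes DIM_eq: "DIM('a) = 2 * n"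
    and unitary: "unitary_frame_coframe J g n e \<phi>"
begin

lemma one_in_frame_range: "1 \<in> {1..n}"
  using DIM_positive[where 'a='a] DIM_eq by simp

lemma coframe_linear: "k \<in> {1..n} \<Longrightarrow> linear (\<phi> k)"
  using unitary by (simp add: unitary_frame_coframe_def)

lemma coframe_add: "k \<in> {1..n} \<Longrightarrow> \<phi> k (x + y) = \<phi> k x + \<phi> k y"
  by (simp add: coframe_linear linear_add)

lemma coframe_diff: "k \<in> {1..n} \<Longrightarrow> \<phi> k (x - y) = \<phi> k x - \<phi> k y"
  by (simp add: coframe_linear linear_diff)

lemma coframe_zero [simp]: "k \<in> {1..n} \<Longrightarrow> \<phi> k 0 = 0"
  by (simp add: coframe_linear linear_0)

lemma coframe_scaleR: "k \<in> {1..n} \<Longrightarrow> \<phi> k (c *\<^sub>R x) = of_real c * \<phi> k x"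
  by (simp add: coframe_linear linear_cmul scaleR_conv_of_real)

lemma coframe_sum: "k \<in> {1..n} \<Longrightarrow> \<phi> k (sum f S) = (\<Sum>a\<in>S. \<phi> k (f a))"
  by (simp add: coframe_linear linear_sum)

text \<open>Since e k lies in g^{1,0}, e k = p k - sqrt(-1) q k with q k = J (p k).\<close>
definition p :: "nat \<Rightarrow> 'a" where "p k = fst (e k)"
definition q :: "nat \<Rightarrow> 'a" where "q k = J (p k)"

lemma frame_eq: "k \<in> {1..n} \<Longrightarrow> e k = (p k, - q k)"
  using unitary unfolding unitary_frame_coframe_def g10_def p_def q_def by force

lemma coframe_p_q:
  assumes k: "k \<in> {1..n}" and l: "l \<in> {1..n}"
  shows "\<phi> k (p l) = (if k = l then 1/2 else 0)" and "\<phi> k (q l) = (if k = l then \<i>/2 else 0)"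
proof -
  have "cext (\<phi> k) (e l) = (if k = l then 1 else 0)" and "cext (\<phi> k) (cconj (e l)) = 0"
    using unitary k l unfolding unitary_frame_coframe_def by auto
  moreover have "\<phi> k (- q l) = - \<phi> k (q l)"
    using coframe_linear[OF k] by (rule linear_neg)
  ultimately have "\<phi> k (p l) - \<i> * \<phi> k (q l) = (if k = l then 1 else 0)"
    and "\<phi> k (p l) + \<i> * \<phi> k (q l) = 0"
    by (simp_all add: frame_eq[OF l] cext_def cconj_def)
  then show "\<phi> k (p l) = (if k = l then 1/2 else 0)" and "\<phi> k (q l) = (if k = l then \<i>/2 else 0)"
    by (auto simp: complex_eq_iff split: if_splits)
qed

lemma g_p_q:
  assumes k: "k \<in> {1..n}" and l: "l \<in> {1..n}"
  shows "g (p k) (p l) = (if k = l then 1/2 else 0)" and "g (p k) (q l) = 0"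
proof -
  have "g (q k) (p l) = - g (p k) (q l)"
    by (simp add: q_def g_J_right g_sym[of "p l"] g_sym[of "J (p l)"])
  then have "gC g (e k) (cconj (e l)) = Complex (2 * g (p k) (p l)) (2 * g (p k) (q l))"
    by (simp add: frame_eq[OF k] frame_eq[OF l] gC_def cconj_def q_def g.minus_left g.minus_right)
  moreover have "gC g (e k) (cconj (e l)) = (if k = l then 1 else 0)"
    using unitary k l unfolding unitary_frame_coframe_def by auto
  ultimately show "g (p k) (p l) = (if k = l then 1/2 else 0)" and "g (p k) (q l) = 0"
    by (auto simp: complex_eq_iff split: if_splits)
qed

definition frame_vector :: "(nat \<Rightarrow> complex) \<Rightarrow> 'a" where
  "frame_vector \<zeta> = (\<Sum>l=1..n. (2 * Re (\<zeta> l)) *\<^sub>R p l + (2 * Im (\<zeta> l)) *\<^sub>R q l)"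

lemma coframe_frame_vector:
  assumes k: "k \<in> {1..n}" shows "\<phi> k (frame_vector \<zeta>) = \<zeta> k"
proof -
  have "\<phi> k (frame_vector \<zeta>) = (\<Sum>l=1..n. if l = k then \<zeta> k else 0)"
    unfolding frame_vector_def coframe_sum[OF k]
    by (rule sum.cong) (auto simp: coframe_add[OF k] coframe_scaleR[OF k] coframe_p_q[OF k] complex_eq_iff)
  then show ?thesis using k by simp
qed

definition frame_basis :: "'a set" where "frame_basis = p ` {1..n} \<union> q ` {1..n}"

lemma frame_p_neq_q:
  assumes k: "k \<in> {1..n}" and l: "l \<in> {1..n}" shows "p k \<noteq> q l"
proof
  assume "p k = q l"
  then have "\<phi> k (p k) = \<phi> k (q l)" by simp
  then show False
    using coframe_p_q[OF k k] coframe_p_q[OF k l] by (auto simp: complex_eq_iff split: if_splits)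
qed

lemma coframe_frame_basis:
  assumes k: "k \<in> {1..n}" and b: "b \<in> frame_basis"
  shows "\<phi> k b = (if b = p k then 1/2 else 0) + (if b = q k then \<i>/2 else 0)"
  using b k frame_p_neq_q[OF k k] by (auto simp: frame_basis_def coframe_p_q)

lemma finite_frame_basis: "finite frame_basis"
  by (simp add: frame_basis_def)

lemma coframe_lincomb_frame_basis:
  assumes k: "k \<in> {1..n}"
  shows "\<phi> k (\<Sum>b\<in>frame_basis. c b *\<^sub>R b) = of_real (c (p k)) / 2 + \<i> * of_real (c (q k)) / 2"
proof -
  have "\<phi> k (\<Sum>b\<in>frame_basis. c b *\<^sub>R b) = (\<Sum>b\<in>frame_basis.
      (if b = p k then of_real (c b) / 2 else 0) + (if b = q k then \<i> * of_real (c b) / 2 else 0))"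
    unfolding coframe_sum[OF k]
    by (rule sum.cong) (use frame_p_neq_q[OF k k] in \<open>simp_all add: coframe_scaleR[OF k] coframe_frame_basis[OF k]\<close>)
  also have "\<dots> = of_real (c (p k)) / 2 + \<i> * of_real (c (q k)) / 2"
    using k by (simp add: sum.distrib frame_basis_def)
  finally show ?thesis .
qed

lemma independent_frame_basis: "independent frame_basis"
proof
  assume "dependent frame_basis"
  then obtain c where c: "\<exists>b\<in>frame_basis. c b \<noteq> 0" "(\<Sum>b\<in>frame_basis. c b *\<^sub>R b) = 0"
    using real_vector.dependent_finite[OF finite_frame_basis] by blast
  have "c (p k) = 0 \<and> c (q k) = 0" if "k \<in> {1..n}" for k
    using coframe_lincomb_frame_basis[OF that, of c] c(2) that by (simp add: complex_eq_iff)
  with c(1) show False by (auto simp: frame_basis_def)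
qed

lemma card_frame_basis: "card frame_basis = 2 * n"
proof -
  have "inj_on p {1..n}"
    by (rule inj_onI) (metis coframe_p_q(1) one_neq_zero divide_eq_0_iff zero_neq_numeral)
  moreover have "inj_on q {1..n}"
    by (rule inj_onI) (metis coframe_p_q(2) complex_i_not_zero divide_eq_0_iff zero_neq_numeral)
  moreover have "p ` {1..n} \<inter> q ` {1..n} = {}"
    using frame_p_neq_q by blast
  ultimately show ?thesis
    by (simp add: frame_basis_def card_Un_disjoint card_image)
qed

lemma span_frame_basis: "span frame_basis = UNIV"
  using card_ge_dim_independent[OF _ independent_frame_basis, of UNIV]
  by (auto simp: card_frame_basis DIM_eq)

lemma coframe_eqI:
  assumes "\<And>k. k \<in> {1..n} \<Longrightarrow> \<phi> k x = \<phi> k y"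
  shows "x = y"
proof -
  obtain c where c: "x - y = (\<Sum>b\<in>frame_basis. c b *\<^sub>R b)"
    using span_frame_basis real_vector.span_finite[of frame_basis]
    by (auto simp: frame_basis_def)
  have "c (p k) = 0 \<and> c (q k) = 0" if k: "k \<in> {1..n}" for k
    using coframe_lincomb_frame_basis[OF k, of c] assms[OF k] c[symmetric]
    by (simp add: coframe_diff[OF k] complex_eq_iff)
  then have "x - y = 0" using c by (auto simp: frame_basis_def intro!: sum.neutral)
  then show ?thesis by simp
qed

lemma frame_vector_coframe: "frame_vector (\<lambda>k. \<phi> k x) = x"
  by (rule coframe_eqI) (simp add: coframe_frame_vector)

lemma linear_eq_0_on_frame:
  fixes f :: "'a \<Rightarrow> 'b::real_vector"
  assumes "linear f" and "\<And>k. k \<in> {1..n} \<Longrightarrow> f (p k) = 0" and "\<And>k. k \<in> {1..n} \<Longrightarrow> f (q k) = 0"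
  shows "f x = 0"
proof -
  have "f x = f (frame_vector (\<lambda>k. \<phi> k x))" by (simp add: frame_vector_coframe)
  then show ?thesis
    using assms by (simp add: frame_vector_def linear_sum linear_add linear_cmul)
qed

lemma coframe_J:
  assumes k: "k \<in> {1..n}" shows "\<phi> k (J x) = \<i> * \<phi> k x"
proof -
  have "\<phi> k (J x) - \<i> * \<phi> k x = 0"
  proof (rule linear_eq_0_on_frame[where f = "\<lambda>x. \<phi> k (J x) - \<i> * \<phi> k x"])
    show "linear (\<lambda>x. \<phi> k (J x) - \<i> * \<phi> k x)"
      by (rule linearI) (simp_all add: J.add J.scaleR coframe_add[OF k] coframe_scaleR[OF k] algebra_simps
          scaleR_conv_of_real)
    show "\<phi> k (J (p l)) - \<i> * \<phi> k (p l) = 0" if "l \<in> {1..n}" for l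
      using k that by (simp add: q_def[symmetric] coframe_p_q)
    show "\<phi> k (J (q l)) - \<i> * \<phi> k (q l) = 0" if "l \<in> {1..n}" for l
      using k that by (simp add: q_def linear_neg[OF coframe_linear[OF k]] coframe_p_q[unfolded q_def])
  qed
  then show ?thesis by simp
qed

lemma g_p_left:
  assumes l: "l \<in> {1..n}" shows "g (p l) y = Re (\<phi> l y)"
proof -
  have "g (p l) y - Re (\<phi> l y) = 0"
  proof (rule linear_eq_0_on_frame[where f = "\<lambda>y. g (p l) y - Re (\<phi> l y)"])
    show "linear (\<lambda>y. g (p l) y - Re (\<phi> l y))"
      by (rule linearI) (simp_all add: g.add_right g.scaleR_right coframe_add[OF l] coframe_scaleR[OF l]
          right_diff_distrib)
  qed (use l in \<open>simp_all add: g_p_q coframe_p_q\<close>)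
  then show ?thesis by simp
qed

lemma g_q_left:
  assumes l: "l \<in> {1..n}" shows "g (q l) y = Im (\<phi> l y)"
proof -
  have "g (q l) y - Im (\<phi> l y) = 0"
  proof (rule linear_eq_0_on_frame[where f = "\<lambda>y. g (q l) y - Im (\<phi> l y)"])
    show "linear (\<lambda>y. g (q l) y - Im (\<phi> l y))"
      by (rule linearI) (simp_all add: g.add_right g.scaleR_right coframe_add[OF l] coframe_scaleR[OF l]
          right_diff_distrib)
    show "g (q l) (p k) - Im (\<phi> l (p k)) = 0" if "k \<in> {1..n}" for k
      using g_p_q(2)[OF that l] l that by (simp add: g_sym coframe_p_q)
    show "g (q l) (q k) - Im (\<phi> l (q k)) = 0" if "k \<in> {1..n}" for k
      using g_p_q(1)[OF l that] l that by (simp add: q_def coframe_p_q[unfolded q_def])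
  qed
  then show ?thesis by simp
qed

lemma sum_coframe_p: "l \<in> {1..n} \<Longrightarrow> (\<Sum>k=1..n. X k * \<phi> k (p l)) = X l / 2"
  by (simp add: coframe_p_q if_distrib[of "\<lambda>z. _ * z"] cong: if_cong)

lemma sum_coframe_q: "l \<in> {1..n} \<Longrightarrow> (\<Sum>k=1..n. X k * \<phi> k (q l)) = \<i> * X l / 2"
  by (simp add: coframe_p_q if_distrib[of "\<lambda>z. _ * z"] cong: if_cong)

lemma g_eq_coframe_sum: "g x y = 2 * Re (\<Sum>k=1..n. \<phi> k x * cnj (\<phi> k y))"
proof -
  have "g x y - 2 * Re (\<Sum>k=1..n. cnj (\<phi> k y) * \<phi> k x) = 0"
  proof (rule linear_eq_0_on_frame[where f = "\<lambda>x. g x y - 2 * Re (\<Sum>k=1..n. cnj (\<phi> k y) * \<phi> k x)"])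
    show "linear (\<lambda>x. g x y - 2 * Re (\<Sum>k=1..n. cnj (\<phi> k y) * \<phi> k x))"
      by (rule linearI) (simp_all add: g.add_left g.scaleR_left coframe_add coframe_scaleR
          algebra_simps sum.distrib sum_distrib_left)
    show "g (p l) y - 2 * Re (\<Sum>k=1..n. cnj (\<phi> k y) * \<phi> k (p l)) = 0" if "l \<in> {1..n}" for l
      by (simp only: sum_coframe_p[OF that]) (simp add: g_p_left[OF that])
    show "g (q l) y - 2 * Re (\<Sum>k=1..n. cnj (\<phi> k y) * \<phi> k (q l)) = 0" if "l \<in> {1..n}" for l
      by (simp only: sum_coframe_q[OF that]) (simp add: g_q_left[OF that])
  qed
  then show ?thesis by (simp add: mult.commute)
qed

end

section \<open>The Chern connection of an admissible frame\<close>

locale admissible_coframe = unitary_coframe J g n e \<phi>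
  for J :: "'a::euclidean_space \<Rightarrow> 'a" and g n e \<phi> +
  fixes br :: "'a \<Rightarrow> 'a \<Rightarrow> 'a" and lam :: real
    and v :: "nat \<Rightarrow> complex" and A :: "nat \<Rightarrow> nat \<Rightarrow> complex"
  assumes admissible: "admissible_frame br J g n e \<phi> lam v A"
begin

abbreviation M :: "nat \<Rightarrow> nat \<Rightarrow> complex" where "M \<equiv> coefficient_matrix lam v A"

lemma coframe_1_bracket: "\<phi> 1 (br x y) = of_real lam * wedge (\<phi> 1) (cnjf (\<phi> 1)) x y"
  using admissible by (simp add: admissible_frame_def dCE_def)

lemma coframe_bracket:
  assumes k: "k \<in> {1..n}"
  shows "\<phi> k (br x y) = (\<phi> 1 x + cnj (\<phi> 1 x)) * (\<Sum>l=1..n. M k l * \<phi> l y)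
                       - (\<phi> 1 y + cnj (\<phi> 1 y)) * (\<Sum>l=1..n. M k l * \<phi> l x)"
proof (cases "k = 1")
  case True
  have row_1: "(\<Sum>l=1..n. M 1 l * \<phi> l z) = - of_real lam * \<phi> 1 z" for z
    using one_in_frame_range by (simp add: coefficient_matrix_def if_distrib[of "\<lambda>c. c * _"] cong: if_cong)
  show ?thesis
    unfolding True coframe_1_bracket wedge_def cnjf_def row_1 by algebra
next
  case False
  then have k2: "k \<in> {2..n}" using k by auto
  define A_phi where "A_phi z = (\<Sum>j=2..n. cnj (A k j) * \<phi> j z)" for z
  have "- \<phi> k (br x y) = - cnj (v k) * wedge (\<phi> 1) (cnjf (\<phi> 1)) x y
         + (\<Sum>j=2..n. cnj (A k j) * wedge (\<lambda>z. \<phi> 1 z + cnjf (\<phi> 1) z) (\<phi> j) x y)"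
    using admissible k2 by (simp add: admissible_frame_def dCE_def)
  also have "\<dots> = - cnj (v k) * (\<phi> 1 x * cnj (\<phi> 1 y) - \<phi> 1 y * cnj (\<phi> 1 x))
      + ((\<phi> 1 x + cnj (\<phi> 1 x)) * A_phi y - (\<phi> 1 y + cnj (\<phi> 1 y)) * A_phi x)"
    by (simp add: wedge_def cnjf_def A_phi_def sum_distrib_left sum_subtractf algebra_simps)
  finally have bracket: "\<phi> k (br x y) = cnj (v k) * (\<phi> 1 x * cnj (\<phi> 1 y) - \<phi> 1 y * cnj (\<phi> 1 x))
      - ((\<phi> 1 x + cnj (\<phi> 1 x)) * A_phi y - (\<phi> 1 y + cnj (\<phi> 1 y)) * A_phi x)"
    by (simp add: algebra_simps)
  have "1 \<le> n" using k2 by simp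
  have row_k: "(\<Sum>l=1..n. M k l * \<phi> l z) = - cnj (v k) * \<phi> 1 z - A_phi z" for z
    using False k2 unfolding sum_atLeastAtMost_1_split[OF \<open>1 \<le> n\<close>] A_phi_def
    by (auto simp: coefficient_matrix_def sum_negf intro!: sum.cong)
  show ?thesis unfolding bracket row_k by algebra
qed

definition connection_form :: "'a \<Rightarrow> nat \<Rightarrow> nat \<Rightarrow> complex" where
  "connection_form x k l = cnj (\<phi> 1 x) * M k l - \<phi> 1 x * cnj (M l k)"

definition chern_nabla :: "'a \<Rightarrow> 'a \<Rightarrow> 'a" where
  "chern_nabla x y = frame_vector (\<lambda>k. \<Sum>l=1..n. connection_form x k l * \<phi> l y)"

lemma coframe_chern_nabla:
  "k \<in> {1..n} \<Longrightarrow> \<phi> k (chern_nabla x y) = (\<Sum>l=1..n. connection_form x k l * \<phi> l y)"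
  by (simp add: chern_nabla_def coframe_frame_vector)

lemma bilinear_chern_nabla: "bilinear chern_nabla"
proof -
  have form_add: "connection_form (x + y) k l = connection_form x k l + connection_form y k l"
    and form_scaleR: "connection_form (c *\<^sub>R x) k l = of_real c * connection_form x k l" for x y c k l
    using coframe_add[OF one_in_frame_range] coframe_scaleR[OF one_in_frame_range]
    by (simp_all add: connection_form_def algebra_simps)
  show ?thesis
    unfolding bilinear_def
    by (auto intro!: linearI coframe_eqI simp: coframe_chern_nabla coframe_add coframe_scaleR
        form_add form_scaleR algebra_simps sum.distrib sum_distrib_left)
qed

lemma chern_nabla_J: "chern_nabla x (J y) = J (chern_nabla x y)"
  by (rule coframe_eqI) (simp add: coframe_chern_nabla coframe_J sum_distrib_left algebra_simps)

lemma chern_nabla_metric: "g (chern_nabla x y) z + g y (chern_nabla x z) = 0"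
proof -
  let ?S = "\<Sum>k=1..n. \<Sum>l=1..n. connection_form x k l * \<phi> l y * cnj (\<phi> k z)"
  have "(\<Sum>k=1..n. \<phi> k y * cnj (\<phi> k (chern_nabla x z)))
        = (\<Sum>k=1..n. \<Sum>l=1..n. \<phi> k y * cnj (connection_form x k l) * cnj (\<phi> l z))"
    by (simp add: coframe_chern_nabla sum_distrib_left mult.assoc)
  also have "\<dots> = (\<Sum>l=1..n. \<Sum>k=1..n. \<phi> k y * cnj (connection_form x k l) * cnj (\<phi> l z))"
    by (rule sum.swap)
  also have "\<dots> = - ?S"
    \<comment> \<open>the connection form is skew-Hermitian\<close>
    by (simp add: connection_form_def sum_negf[symmetric] algebra_simps)
  finally show ?thesis
    by (simp add: g_eq_coframe_sum[of "chern_nabla x y"] g_eq_coframe_sum[of y]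
        coframe_chern_nabla sum_distrib_right)
qed

lemma connection_form_sum_J:
  "(\<Sum>l=1..n. connection_form x k l * \<phi> l y) + (\<Sum>l=1..n. connection_form (J x) k l * \<phi> l (J y))
   = 2 * cnj (\<phi> 1 x) * (\<Sum>l=1..n. M k l * \<phi> l y)"
proof -
  have "connection_form x k l * \<phi> l y + connection_form (J x) k l * \<phi> l (J y)
        = 2 * cnj (\<phi> 1 x) * (M k l * \<phi> l y)" if "l \<in> {1..n}" for l
    unfolding connection_form_def coframe_J[OF one_in_frame_range] coframe_J[OF that]
    by (simp add: algebra_simps)
  then show ?thesis
    by (simp add: sum.distrib[symmetric] sum_distrib_left)
qed

lemma chern_nabla_torsion: "torsion br chern_nabla x y + torsion br chern_nabla (J x) (J y) = 0"
proof -
  have "\<phi> k (torsion br chern_nabla x y + torsion br chern_nabla (J x) (J y)) = 0" if k: "k \<in> {1..n}" for k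
  proof -
    define N where "N z = (\<Sum>l=1..n. M k l * \<phi> l z)" for z
    have N_J: "N (J z) = \<i> * N z" for z
      unfolding N_def by (simp add: coframe_J sum_distrib_left algebra_simps)
    have "\<phi> k (torsion br chern_nabla x y + torsion br chern_nabla (J x) (J y))
      = ((\<Sum>l=1..n. connection_form x k l * \<phi> l y) + (\<Sum>l=1..n. connection_form (J x) k l * \<phi> l (J y)))
      - ((\<Sum>l=1..n. connection_form y k l * \<phi> l x) + (\<Sum>l=1..n. connection_form (J y) k l * \<phi> l (J x)))
      - \<phi> k (br x y) - \<phi> k (br (J x) (J y))"
      using k by (simp add: torsion_def coframe_add coframe_diff coframe_chern_nabla)
    also have "\<dots> = 0"
      unfolding connection_form_sum_J coframe_bracket[OF k] N_def[symmetric] N_J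
        coframe_J[OF one_in_frame_range] complex_cnj_mult
      by (simp add: algebra_simps)
    finally show ?thesis .
  qed
  then show ?thesis by (intro coframe_eqI) simp
qed

lemma chern_nabla_is_chern_connection: "is_chern_connection br J g chern_nabla"
  unfolding is_chern_connection_def
  using bilinear_chern_nabla chern_nabla_J chern_nabla_metric chern_nabla_torsion by blast

lemma sum_connection_form_mult:
  "(\<Sum>l=1..n. connection_form x k l * connection_form y l m) =
     cnj (\<phi> 1 x) * cnj (\<phi> 1 y) * (\<Sum>l=1..n. M k l * M l m)
     - cnj (\<phi> 1 x) * \<phi> 1 y * (\<Sum>l=1..n. M k l * cnj (M m l))
     - \<phi> 1 x * cnj (\<phi> 1 y) * (\<Sum>l=1..n. cnj (M l k) * M l m)
     + \<phi> 1 x * \<phi> 1 y * (\<Sum>l=1..n. cnj (M l k) * cnj (M m l))"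
  by (simp add: connection_form_def algebra_simps sum.distrib sum_subtractf sum_distrib_left)

lemma coframe_curvature:
  assumes k: "k \<in> {1..n}"
  shows "\<phi> k (chern_nabla x (chern_nabla y z) - chern_nabla y (chern_nabla x z) - chern_nabla (br x y) z)
    = wedge (\<phi> 1) (cnjf (\<phi> 1)) x y * (\<Sum>m=1..n. curvature_matrix n lam M k m * \<phi> m z)"
proof -
  have comp: "(\<Sum>l=1..n. connection_form x k l * \<phi> l (chern_nabla y z))
      = (\<Sum>m=1..n. (\<Sum>l=1..n. connection_form x k l * connection_form y l m) * \<phi> m z)" for x y
  proof -
    have "(\<Sum>l=1..n. connection_form x k l * \<phi> l (chern_nabla y z))
        = (\<Sum>l=1..n. \<Sum>m=1..n. connection_form x k l * connection_form y l m * \<phi> m z)"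
      by (rule sum.cong) (simp_all add: coframe_chern_nabla sum_distrib_left mult.assoc)
    also have "\<dots> = (\<Sum>m=1..n. \<Sum>l=1..n. connection_form x k l * connection_form y l m * \<phi> m z)"
      by (rule sum.swap)
    finally show ?thesis by (simp add: sum_distrib_right)
  qed
  have coefficient: "(\<Sum>l=1..n. connection_form x k l * connection_form y l m)
      - (\<Sum>l=1..n. connection_form y k l * connection_form x l m) - connection_form (br x y) k m
      = wedge (\<phi> 1) (cnjf (\<phi> 1)) x y * curvature_matrix n lam M k m" for m
    unfolding sum_connection_form_mult curvature_matrix_def connection_form_def[of "br x y"]
      coframe_1_bracket wedge_def cnjf_def
    by (simp add: algebra_simps)
  have "\<phi> k (chern_nabla x (chern_nabla y z) - chern_nabla y (chern_nabla x z) - chern_nabla (br x y) z)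
    = (\<Sum>m=1..n. ((\<Sum>l=1..n. connection_form x k l * connection_form y l m)
        - (\<Sum>l=1..n. connection_form y k l * connection_form x l m) - connection_form (br x y) k m) * \<phi> m z)"
    unfolding coframe_diff[OF k] coframe_chern_nabla[OF k] comp
    by (simp add: sum_subtractf left_diff_distrib)
  then show ?thesis
    unfolding coefficient by (simp add: sum_distrib_left mult.assoc)
qed

lemma flat_chern_nabla_iff:
  "flat br chern_nabla \<longleftrightarrow> (\<forall>k\<in>{1..n}. \<forall>m\<in>{1..n}. curvature_matrix n lam M k m = 0)"
proof
  assume flat: "flat br chern_nabla"
  show "\<forall>k\<in>{1..n}. \<forall>m\<in>{1..n}. curvature_matrix n lam M k m = 0"
  proof (intro ballI)
    fix k m assume k: "k \<in> {1..n}" and m: "m \<in> {1..n}"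
    have "wedge (\<phi> 1) (cnjf (\<phi> 1)) (p 1) (q 1) = - \<i> / 2"
      using one_in_frame_range by (simp add: wedge_def cnjf_def coframe_p_q)
    moreover have "wedge (\<phi> 1) (cnjf (\<phi> 1)) (p 1) (q 1)
        * (\<Sum>j=1..n. curvature_matrix n lam M k j * \<phi> j (p m)) = 0"
      using flat k unfolding flat_def coframe_curvature[OF k, symmetric] by simp
    ultimately show "curvature_matrix n lam M k m = 0"
      using sum_coframe_p[OF m, of "curvature_matrix n lam M k"] by simp
  qed
next
  assume flat: "\<forall>k\<in>{1..n}. \<forall>m\<in>{1..n}. curvature_matrix n lam M k m = 0"
  have curvature_0: "\<phi> k (chern_nabla x (chern_nabla y z) - chern_nabla y (chern_nabla x z)
      - chern_nabla (br x y) z) = 0" if k: "k \<in> {1..n}" for k x y z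
    using flat k by (simp add: coframe_curvature[OF k] sum.neutral)
  show "flat br chern_nabla"
    unfolding flat_def by (intro allI coframe_eqI) (simp add: curvature_0)
qed

end

theorem lemma6:
  fixes br :: "'a::euclidean_space \<Rightarrow> 'a \<Rightarrow> 'a"
    and J :: "'a \<Rightarrow> 'a" and g :: "'a \<Rightarrow> 'a \<Rightarrow> real" and n :: nat
    and e :: "nat \<Rightarrow> 'a \<times> 'a" and \<phi> :: "nat \<Rightarrow> 'a \<Rightarrow> complex"
    and lam :: real and v :: "nat \<Rightarrow> complex" and A :: "nat \<Rightarrow> nat \<Rightarrow> complex"
  assumes "almost_abelian br"
    and "hermitian_structure br J g"
    and "DIM('a) = 2 * n"
    and "admissible_frame br J g n e \<phi> lam v A"
  shows "flat br (chern_connection br J g) \<longleftrightarrow>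
           lam = 0 \<and> (\<forall>i\<in>{2..n}. v i = 0) \<and>
           (\<forall>i\<in>{2..n}. \<forall>j\<in>{2..n}.
              (\<Sum>k=2..n. A i k * cnj (A j k)) = (\<Sum>k=2..n. cnj (A k i) * A k j))"
proof -
  interpret admissible_coframe J g n e \<phi> br lam v A
    using assms(2-4)
    by (intro admissible_coframe.intro unitary_coframe.intro unitary_coframe_axioms.intro
        admissible_coframe_axioms.intro hermitian_structure_imp_hermitian_metric)
      (auto simp: admissible_frame_def)
  have "chern_connection br J g = chern_nabla"
    by (rule chern_connection_eqI[OF chern_nabla_is_chern_connection])
  moreover have "1 \<le> n"
    using one_in_frame_range by simp
  ultimately show ?thesis
    using curvature_coefficient_matrix_eq_0_iff[of n lam v A] by (simp only: flat_chern_nabla_iff)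
qed

end
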